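(* Let $(e_i)$ be a right dominant normalized basis of a Banach space $E$, and let $J(e_i)$, $(u_i)$ be as in the context. There exists a constant $C$ such that the following holds. Whenever $l\in\mathbb N$, $n(1)<n(2)<\dots<n(l+1)$ are positive integers and $(a_j)$ are real numbers such that \[ v_i=\sum_{j=n(i)}^{n(i+1)-1}a_ju_j,\qquad \sum_{j=n(i)}^{n(i+1)-1}a_j=0,\qquad 1\le i\le l, \] there is a block basis $(w_i)_{i=1}^l$ of $(e_i)$ such that $\|w_i\|\le\|v_i\|$ for $1\le i\le l$ and $\|\sum_{i=1}^l v_i\|\le C\|\sum_{i=1}^l w_i\|$.
   Context: A basic sequence $(x_i)$ is right dominant if it is unconditional and there is a constant $D$ such that whenever $1\le m(1)\le n(1)<m(2)\le n(2)<\dots$ and $(a_{n(i)})$ is a finitely nonzero real sequence, $\|\sum a_{n(i)}x_{m(i)}\|\le D\|\sum a_{n(i)}x_{n(i)}\|$. Given a normalized unconditional basis $(e_i)$ of $E$, for finitely nonzero real $(a_i)$ define \[\Big\|\sum a_iu_i\Big\|=\sup\Big\{\Big\|\sum_{i=1}^k\Big(\sum_{j=p(i)}^{p(i+1)-1}a_j\Big)e_{p(i)}\Big\|_E : k\in\mathbb N,\ 1=p(1)<p(2)<\dots<p(k+1)\Big\},\] and let $J(e_i)$ be the completion of the linear span of the formal vectors $(u_i)$ under this norm; $(u_i)$ is a basis of $J(e_i)$. A block basis of a basis $(x_i)$ is a sequence $w_m=\sum_{j=q_m}^{q_{m+1}-1}c_jx_j$ with $q_1<q_2<\cdots$. *)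

theory Defs
  imports "HOL-Analysis.Analysis"
begin

text \<open>Indexing convention: all sequences are indexed from 0 (the paper's index 1
corresponds to index 0 here).\<close>

definition schauder_basis :: "(nat \<Rightarrow> 'a::banach) \<Rightarrow> bool" where
  "schauder_basis e \<longleftrightarrow>
     (\<forall>x. \<exists>!a::nat \<Rightarrow> real. (\<lambda>n. \<Sum>i<n. a i *\<^sub>R e i) \<longlonglongrightarrow> x)"

definition unconditional_basis :: "(nat \<Rightarrow> 'a::banach) \<Rightarrow> bool" where
  "unconditional_basis e \<longleftrightarrow> schauder_basis e \<and>
     (\<forall>x a. (\<lambda>n. \<Sum>i<n. a i *\<^sub>R e i) \<longlonglongrightarrow> x \<longrightarrow>
             ((\<lambda>i. a i *\<^sub>R e i) has_sum x) UNIV)"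

definition normalized :: "(nat \<Rightarrow> 'a::real_normed_vector) \<Rightarrow> bool" where
  "normalized e \<longleftrightarrow> (\<forall>i. norm (e i) = 1)"

text \<open>Right dominance: 0 \<le> m(0) \<le> n(0) < m(1) \<le> n(1) < ... (k terms),
coefficients b i standing for a_{n(i)}.\<close>
definition right_dominant :: "(nat \<Rightarrow> 'a::banach) \<Rightarrow> bool" where
  "right_dominant x \<longleftrightarrow> unconditional_basis x \<and>
     (\<exists>D. \<forall>(k::nat) (m::nat \<Rightarrow> nat) (n::nat \<Rightarrow> nat) (b::nat \<Rightarrow> real).
        (\<forall>i<k. m i \<le> n i) \<and> (\<forall>i. Suc i < k \<longrightarrow> n i < m (Suc i)) \<longrightarrow>
        norm (\<Sum>i<k. b i *\<^sub>R x (m i)) \<le> D * norm (\<Sum>i<k. b i *\<^sub>R x (n i)))"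

text \<open>The norm of J(e_i) on the finite vector \<Sum> a_j u_j (a finitely supported):
supremum over k and 0 = p(0) < p(1) < ... < p(k).\<close>
definition Jnorm :: "(nat \<Rightarrow> 'a::real_normed_vector) \<Rightarrow> (nat \<Rightarrow> real) \<Rightarrow> real" where
  "Jnorm e a = (SUP kp \<in> {(k::nat, p::nat \<Rightarrow> nat). p 0 = 0 \<and> (\<forall>i<k. p i < p (Suc i))}.
      norm (\<Sum>i<fst kp. (\<Sum>j\<in>{snd kp i..<snd kp (Suc i)}. a j) *\<^sub>R e (snd kp i)))"

end

theory Submission
  imports Defs
begin

text \<open>
  A near-norming partition p for the J-norm of a sum of zero-sum blocks v_i gives the vector
  \<open>\<Sum>k (S (p (k+1)) - S (p k)) e (p k)\<close>, where S are the partial sums of the coefficients.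
  S vanishes at every block endpoint, so cutting \<open>[p k, p (k+1))\<close> at the last endpoint z k below
  \<open>p (k+1)\<close> splits each coefficient as F k + G k; the refined vector keeps F k at p k and moves
  G k right to z k. Its restriction to the i-th block is, up to a projection and one coefficient
  moved to the left endpoint of the block, the J-vector of v_i for the same partition, so it has
  norm at most 2L J(v_i) and w_i is this restriction divided by 2L. Conversely, the unconditional
  constant L separates the F-part of the refined vector from its G-part, and right dominance moves
  the G-part back from z k to p k at the cost of the constant D. That an unconditional basis has a
  uniform suppression constant L is the Baire category argument of the open mapping theorem,
  applied to the sets of vectors all of whose finite partial expansions are bounded.
\<close>

section \<open>The suppression constant of an unconditional basis\<close>

lemma Baire_banach:
  fixes F :: "nat \<Rightarrow> 'a::banach set"
  assumes "(\<Union>n. F n) = UNIV"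
  shows "\<exists>n. interior (closure (F n)) \<noteq> {}"
proof (rule ccontr)
  assume "\<not> ?thesis"
  then have "euclidean interior_of (\<Union>n. closure (F n)) = {}"
    by (intro Baire_category_alt) (auto simp: completely_metrizable_space_euclidean)
  moreover have "(\<Union>n. closure (F n)) = UNIV"
    using assms closure_subset by blast
  ultimately show False by simp
qed

lemma tendsto_suminf_zero_dominated:
  fixes f :: "nat \<Rightarrow> nat \<Rightarrow> 'a::banach"
  assumes lim: "\<And>k. (\<lambda>N. f N k) \<longlonglongrightarrow> 0"
    and bound: "\<And>N k. norm (f N k) \<le> M k" and M: "summable M"
  shows "(\<lambda>N. suminf (f N)) \<longlonglongrightarrow> 0"
proof (rule LIMSEQ_I)
  fix \<epsilon> :: real assume "\<epsilon> > 0"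
  then obtain m where tail: "norm (\<Sum>k. M (k + m)) < \<epsilon> / 2"
    using suminf_exist_split[OF _ M, of "\<epsilon> / 2"] by auto
  have "(\<lambda>N. \<Sum>k<m. f N k) \<longlonglongrightarrow> (\<Sum>k<m. 0)"
    by (intro tendsto_sum lim)
  then obtain N0 where head: "\<And>N. N \<ge> N0 \<Longrightarrow> norm (\<Sum>k<m. f N k) < \<epsilon> / 2"
    using LIMSEQ_D \<open>\<epsilon> > 0\<close> half_gt_zero by (metis diff_zero sum.neutral_const)
  show "\<exists>N0. \<forall>N\<ge>N0. norm (suminf (f N) - 0) < \<epsilon>"
  proof (intro exI allI impI)
    fix N assume "N \<ge> N0"
    have summable: "summable (f N)"
      using summable_norm_comparison_test bound M summable_norm_cancel by blast
    have "norm (\<Sum>k. f N (k + m)) \<le> (\<Sum>k. M (k + m))"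
      by (rule norm_suminf_le) (use bound M summable_iff_shift in auto)
    then have "norm (\<Sum>k. f N (k + m)) < \<epsilon> / 2" using tail by simp
    moreover have "suminf (f N) = (\<Sum>k. f N (k + m)) + (\<Sum>k<m. f N k)"
      by (rule suminf_split_initial_segment[OF summable])
    ultimately show "norm (suminf (f N) - 0) < \<epsilon>"
      using head[OF \<open>N \<ge> N0\<close>] norm_triangle_lt[of "\<Sum>k. f N (k + m)" "\<Sum>k<m. f N k"] by simp
  qed
qed

definition suppression_constant :: "(nat \<Rightarrow> 'a::real_normed_vector) \<Rightarrow> real \<Rightarrow> bool" where
  "suppression_constant e L \<longleftrightarrow> (\<forall>A B c. finite B \<longrightarrow> A \<subseteq> B \<longrightarrow>
     norm (\<Sum>j\<in>A. c j *\<^sub>R e j) \<le> L * norm (\<Sum>j\<in>B. c j *\<^sub>R e j))"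

context
  fixes e :: "nat \<Rightarrow> 'a::banach"
  assumes basis: "unconditional_basis e"
begin

definition coeff :: "'a \<Rightarrow> nat \<Rightarrow> real" where
  "coeff x = (THE a. (\<lambda>n. \<Sum>i<n. a i *\<^sub>R e i) \<longlonglongrightarrow> x)"

lemma ex1_expansion: "\<exists>!a. (\<lambda>n. \<Sum>i<n. a i *\<^sub>R e i) \<longlonglongrightarrow> x"
  using basis unfolding unconditional_basis_def schauder_basis_def by blast

lemma coeff_expansion: "(\<lambda>n. \<Sum>i<n. coeff x i *\<^sub>R e i) \<longlonglongrightarrow> x"
  unfolding coeff_def by (rule theI'[OF ex1_expansion])

lemma coeff_eqI: "(\<lambda>n. \<Sum>i<n. a i *\<^sub>R e i) \<longlonglongrightarrow> x \<Longrightarrow> coeff x = a"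
  using ex1_expansion coeff_expansion by blast

lemma coeff_has_sum: "((\<lambda>i. coeff x i *\<^sub>R e i) has_sum x) UNIV"
  using basis coeff_expansion unfolding unconditional_basis_def by blast

lemma coeff_diff: "coeff (x - y) = (\<lambda>i. coeff x i - coeff y i)"
  by (rule coeff_eqI)
    (use tendsto_diff[OF coeff_expansion[of x] coeff_expansion[of y]] in
      \<open>simp add: scaleR_diff_left sum_subtractf\<close>)

lemma coeff_scaleR: "coeff (t *\<^sub>R x) = (\<lambda>i. t * coeff x i)"
  by (rule coeff_eqI)
    (use tendsto_scaleR[OF tendsto_const[of t] coeff_expansion[of x]] in
      \<open>simp add: scaleR_sum_right\<close>)

lemma coeff_zero: "coeff 0 = (\<lambda>i. 0)"
  using coeff_scaleR[of 0 0] by simp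

lemma coeff_sum: "coeff (\<Sum>j\<in>B. c j *\<^sub>R e j) = (\<lambda>j. if j \<in> B then c j else 0)"
  if "finite B"
proof (rule coeff_eqI)
  obtain N where "B \<subseteq> {..<N}"
    using \<open>finite B\<close> finite_nat_bounded by blast
  then have "(\<Sum>i<n. (if i \<in> B then c i else 0) *\<^sub>R e i) = (\<Sum>j\<in>B. c j *\<^sub>R e j)" if "n \<ge> N" for n
    using that by (intro sum.mono_neutral_cong_right) auto
  then show "(\<lambda>n. \<Sum>i<n. (if i \<in> B then c i else 0) *\<^sub>R e i) \<longlonglongrightarrow> (\<Sum>j\<in>B. c j *\<^sub>R e j)"
    by (intro tendsto_eventually) (auto simp: eventually_sequentially)
qed

lemma basis_nonzero: "e i \<noteq> 0"
proof
  assume "e i = 0"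
  then have "(\<Sum>j\<in>{i}. 1 *\<^sub>R e j) = 0" by simp
  then have "coeff 0 i = 1"
    using coeff_sum[of "{i}" "\<lambda>_. 1"] by simp
  then show False by (simp add: coeff_zero)
qed

definition bounded_expansion :: "real \<Rightarrow> 'a set" where
  "bounded_expansion c = {x. \<forall>A. finite A \<longrightarrow> norm (\<Sum>i\<in>A. coeff x i *\<^sub>R e i) \<le> c}"

lemma bounded_expansionD:
  "x \<in> bounded_expansion c \<Longrightarrow> finite A \<Longrightarrow> norm (\<Sum>i\<in>A. coeff x i *\<^sub>R e i) \<le> c"
  unfolding bounded_expansion_def by blast

lemma bounded_expansion_mono: "x \<in> bounded_expansion c \<Longrightarrow> c \<le> d \<Longrightarrow> x \<in> bounded_expansion d"
  unfolding bounded_expansion_def by (blast intro: order_trans)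

lemma zero_in_bounded_expansion: "0 \<in> bounded_expansion 0"
  unfolding bounded_expansion_def by (simp add: coeff_zero)

lemma bounded_expansion_diff:
  assumes "x \<in> bounded_expansion c" "y \<in> bounded_expansion d"
  shows "x - y \<in> bounded_expansion (c + d)"
  unfolding bounded_expansion_def
proof (intro CollectI allI impI)
  fix A :: "nat set" assume "finite A"
  have "norm (\<Sum>i\<in>A. coeff (x - y) i *\<^sub>R e i)
      = norm ((\<Sum>i\<in>A. coeff x i *\<^sub>R e i) - (\<Sum>i\<in>A. coeff y i *\<^sub>R e i))"
    by (simp add: coeff_diff scaleR_diff_left sum_subtractf)
  also have "\<dots> \<le> c + d"
    using norm_triangle_ineq4 add_mono[OF bounded_expansionD[OF assms(1) \<open>finite A\<close>]
      bounded_expansionD[OF assms(2) \<open>finite A\<close>]] by (rule order_trans)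
  finally show "norm (\<Sum>i\<in>A. coeff (x - y) i *\<^sub>R e i) \<le> c + d" .
qed

lemma bounded_expansion_scaleR:
  assumes "x \<in> bounded_expansion c"
  shows "t *\<^sub>R x \<in> bounded_expansion (\<bar>t\<bar> * c)"
  unfolding bounded_expansion_def
proof (intro CollectI allI impI)
  fix A :: "nat set" assume "finite A"
  have "norm (\<Sum>i\<in>A. coeff (t *\<^sub>R x) i *\<^sub>R e i) = \<bar>t\<bar> * norm (\<Sum>i\<in>A. coeff x i *\<^sub>R e i)"
    by (simp add: coeff_scaleR scaleR_sum_right flip: norm_scaleR)
  also have "\<dots> \<le> \<bar>t\<bar> * c"
    using bounded_expansionD[OF assms \<open>finite A\<close>] by (rule mult_left_mono) simp
  finally show "norm (\<Sum>i\<in>A. coeff (t *\<^sub>R x) i *\<^sub>R e i) \<le> \<bar>t\<bar> * c" .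
qed

lemma norm_le_if_bounded_expansion: "x \<in> bounded_expansion c \<Longrightarrow> norm x \<le> c"
  using tendsto_norm[OF coeff_expansion[of x]] by (rule LIMSEQ_le_const2) (auto dest: bounded_expansionD)

lemma abs_coeff_le_if_bounded_expansion:
  "x \<in> bounded_expansion c \<Longrightarrow> \<bar>coeff x i\<bar> * norm (e i) \<le> c"
  using bounded_expansionD[of x c "{i}"] by simp

lemma ex_bounded_expansion: "\<exists>c. x \<in> bounded_expansion c"
proof -
  let ?f = "\<lambda>i. coeff x i *\<^sub>R e i"
  have "\<forall>\<^sub>F A in finite_subsets_at_top UNIV. dist (sum ?f A) x < 1"
    using tendstoD[OF coeff_has_sum[of x, unfolded has_sum_def] zero_less_one] .
  then obtain A0 where "finite A0" and A0: "\<And>A. finite A \<Longrightarrow> A0 \<subseteq> A \<Longrightarrow> dist (sum ?f A) x < 1"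
    unfolding eventually_finite_subsets_at_top by auto
  have "norm (sum ?f A) \<le> norm x + 1 + (\<Sum>i\<in>A0. norm (?f i))" if "finite A" for A
  proof -
    have "sum ?f (A \<union> A0) = sum ?f A + sum ?f (A0 - A)"
      using \<open>finite A\<close> \<open>finite A0\<close> sum.union_disjoint[of A "A0 - A" ?f] by (simp add: Un_Diff_cancel)
    then have "norm (sum ?f A) \<le> norm (sum ?f (A \<union> A0)) + norm (sum ?f (A0 - A))"
      by (metis add_diff_cancel_right' norm_triangle_ineq4)
    moreover have "norm (sum ?f (A \<union> A0)) \<le> norm x + 1"
    proof -
      have "norm (sum ?f (A \<union> A0) - x) < 1"
        using A0[of "A \<union> A0"] \<open>finite A\<close> \<open>finite A0\<close> by (simp add: dist_norm)
      then show ?thesis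
        using norm_triangle_sub[of "sum ?f (A \<union> A0)" x] by linarith
    qed
    moreover have "norm (sum ?f (A0 - A)) \<le> (\<Sum>i\<in>A0. norm (?f i))"
      using norm_sum[of ?f "A0 - A"] sum_mono2[OF \<open>finite A0\<close>, of "A0 - A" "\<lambda>i. norm (?f i)"]
      by simp
    ultimately show ?thesis by linarith
  qed
  then show ?thesis unfolding bounded_expansion_def by blast
qed

lemma ball_subset_closure_bounded_expansion:
  "\<exists>m r. 0 < r \<and> ball 0 r \<subseteq> closure (bounded_expansion m)"
proof -
  have "x \<in> (\<Union>n. bounded_expansion (real n))" for x
  proof -
    obtain c where "x \<in> bounded_expansion c"
      using ex_bounded_expansion by blast
    then have "x \<in> bounded_expansion (real (nat \<lceil>c\<rceil>))"
      by (rule bounded_expansion_mono) linarith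
    then show ?thesis by (rule UN_I[OF UNIV_I])
  qed
  then have "(\<Union>n. bounded_expansion (real n)) = UNIV" by auto
  then obtain n where "interior (closure (bounded_expansion (real n))) \<noteq> {}"
    using Baire_banach by blast
  then obtain x0 r where "0 < r" and ball: "ball x0 r \<subseteq> closure (bounded_expansion (real n))"
    by (meson ex_in_conv mem_interior interior_subset subset_trans)
  let ?B = "bounded_expansion (real n)"
  have "(\<lambda>(u, v). u - v) ` closure (?B \<times> ?B) \<subseteq> closure (bounded_expansion (2 * real n))"
  proof (rule image_closure_subset)
    show "continuous_on (closure (?B \<times> ?B)) (\<lambda>(u, v). u - v)"
      unfolding case_prod_unfold by (intro continuous_intros)
    show "(\<lambda>(u, v). u - v) ` (?B \<times> ?B) \<subseteq> closure (bounded_expansion (2 * real n))"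
      using bounded_expansion_diff[of _ "real n" _ "real n"] closure_subset by fastforce
  qed simp
  then have "u - v \<in> closure (bounded_expansion (2 * real n))"
    if "u \<in> closure ?B" "v \<in> closure ?B" for u v
    using that by (force simp: closure_Times)
  moreover have "y = (x0 + y) - x0" "x0 + y \<in> closure ?B" "x0 \<in> closure ?B" if "y \<in> ball 0 r" for y
    using ball that \<open>0 < r\<close> by (auto simp: dist_norm)
  ultimately have "ball 0 r \<subseteq> closure (bounded_expansion (2 * real n))"
    by (metis subsetI)
  then show ?thesis using \<open>0 < r\<close> by blast
qed

lemma approximation_by_bounded_expansion:
  "\<exists>L\<ge>0. \<forall>y \<epsilon>. 0 < \<epsilon> \<longrightarrow> (\<exists>z\<in>bounded_expansion (L * norm y). norm (y - z) < \<epsilon>)"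
proof -
  obtain m r where "0 < r" and ball: "ball 0 r \<subseteq> closure (bounded_expansion m)"
    using ball_subset_closure_bounded_expansion by blast
  have "m \<ge> 0"
  proof -
    obtain z where "z \<in> bounded_expansion m"
      using ball \<open>0 < r\<close> by (metis centre_in_ball closure_empty empty_iff ex_in_conv subsetD)
    then show ?thesis using norm_le_if_bounded_expansion norm_ge_zero order_trans by blast
  qed
  have "\<exists>z\<in>bounded_expansion (2 * m / r * norm y). norm (y - z) < \<epsilon>" if "0 < \<epsilon>" for y \<epsilon>
  proof (cases "y = 0")
    case True
    then show ?thesis using zero_in_bounded_expansion that by force
  next
    case False
    define t where "t = r / (2 * norm y)"
    have "0 < t" using False \<open>0 < r\<close> by (simp add: t_def)
    have "t *\<^sub>R y \<in> ball 0 r"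
      using False \<open>0 < r\<close> by (simp add: t_def)
    then obtain z where z: "z \<in> bounded_expansion m" "dist z (t *\<^sub>R y) < t * \<epsilon>"
      using ball \<open>0 < t\<close> \<open>0 < \<epsilon>\<close> by (meson closure_approachable mult_pos_pos subsetD)
    have "(1 / t) *\<^sub>R z \<in> bounded_expansion (2 * m / r * norm y)"
      using bounded_expansion_scaleR[OF z(1), of "1 / t"] \<open>0 < t\<close> False \<open>0 < r\<close>
      by (simp add: t_def field_simps)
    moreover have "norm (y - (1 / t) *\<^sub>R z) < \<epsilon>"
    proof -
      have "y - (1 / t) *\<^sub>R z = (1 / t) *\<^sub>R (t *\<^sub>R y - z)"
        using \<open>0 < t\<close> by (simp add: algebra_simps)
      then show ?thesis
        using z(2) \<open>0 < t\<close> by (simp add: dist_norm norm_minus_commute divide_less_eq mult.commute)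
    qed
    ultimately show ?thesis by blast
  qed
  moreover have "0 \<le> 2 * m / r" using \<open>m \<ge> 0\<close> \<open>0 < r\<close> by simp
  ultimately show ?thesis by blast
qed

lemma sums_in_bounded_expansion:
  assumes z: "z sums y" and bounded: "\<And>k. z k \<in> bounded_expansion (\<beta> k)" and "summable \<beta>"
  shows "y \<in> bounded_expansion (suminf \<beta>)"
proof -
  define b where "b i = (\<Sum>k. coeff (z k) i)" for i
  have b: "(\<lambda>k. coeff (z k) i) sums b i" for i
  proof -
    have "norm (coeff (z k) i) \<le> \<beta> k / norm (e i)" for k
      using abs_coeff_le_if_bounded_expansion[OF bounded] basis_nonzero by (simp add: field_simps)
    then have "summable (\<lambda>k. coeff (z k) i)"
      by (intro summable_comparison_test'[OF summable_divide[OF \<open>summable \<beta>\<close>]])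
    then show ?thesis unfolding b_def by (rule summable_sums)
  qed
  have partial: "(\<lambda>k. \<Sum>i\<in>A. coeff (z k) i *\<^sub>R e i) sums (\<Sum>i\<in>A. b i *\<^sub>R e i)" if "finite A" for A
    using that by (intro sums_sum sums_scaleR_left b)
  have "(\<lambda>N. \<Sum>k. (\<Sum>i<N. coeff (z k) i *\<^sub>R e i) - z k) \<longlonglongrightarrow> 0"
  proof (rule tendsto_suminf_zero_dominated)
    show "(\<lambda>N. (\<Sum>i<N. coeff (z k) i *\<^sub>R e i) - z k) \<longlonglongrightarrow> 0" for k
      using coeff_expansion[of "z k"] by (rule LIM_zero)
    show "norm ((\<Sum>i<N. coeff (z k) i *\<^sub>R e i) - z k) \<le> 2 * \<beta> k" for N k
      using norm_triangle_ineq4[of "\<Sum>i<N. coeff (z k) i *\<^sub>R e i" "z k"]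
        bounded_expansionD[OF bounded[of k], of "{..<N}"] norm_le_if_bounded_expansion[OF bounded[of k]]
      by simp
    show "summable (\<lambda>k. 2 * \<beta> k)"
      using \<open>summable \<beta>\<close> by (rule summable_mult)
  qed
  moreover have "(\<Sum>k. (\<Sum>i<N. coeff (z k) i *\<^sub>R e i) - z k) = (\<Sum>i<N. b i *\<^sub>R e i) - y" for N
    using sums_unique[OF sums_diff[OF partial[of "{..<N}"] z]] by simp
  ultimately have "(\<lambda>N. \<Sum>i<N. b i *\<^sub>R e i) \<longlonglongrightarrow> y"
    by (simp add: LIM_zero_iff)
  then have "coeff y = b" by (rule coeff_eqI)
  have "norm (\<Sum>i\<in>A. b i *\<^sub>R e i) \<le> suminf \<beta>" if "finite A" for A
    using bounded_expansionD[OF bounded that] \<open>summable \<beta>\<close>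
    unfolding sums_unique[OF partial[OF that]] by (rule norm_suminf_le)
  then show ?thesis
    by (simp add: bounded_expansion_def \<open>coeff y = b\<close>)
qed

lemma obtain_residuals:
  assumes "0 \<le> L"
    and approx: "\<And>y \<epsilon>. 0 < \<epsilon> \<Longrightarrow> \<exists>z\<in>bounded_expansion (L * norm y). norm (y - z) < \<epsilon>"
    and "0 < \<delta>" "norm y \<le> \<delta>"
  obtains r where "r 0 = y" "\<And>k. norm (r k) \<le> \<delta> / 2 ^ k"
    "\<And>k. r k - r (Suc k) \<in> bounded_expansion (L * \<delta> / 2 ^ k)"
proof -
  have "\<exists>r. \<forall>k. (norm (r k) \<le> \<delta> / 2 ^ k \<and> (k = 0 \<longrightarrow> r k = y)) \<and>
      r k - r (Suc k) \<in> bounded_expansion (L * \<delta> / 2 ^ k)"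
  proof (rule dependent_nat_choice)
    show "\<exists>x. norm x \<le> \<delta> / 2 ^ 0 \<and> (0 = (0::nat) \<longrightarrow> x = y)"
      using assms(4) by auto
  next
    fix x k assume x: "norm x \<le> \<delta> / 2 ^ k \<and> (k = 0 \<longrightarrow> x = y)"
    obtain z where z: "z \<in> bounded_expansion (L * norm x)" "norm (x - z) < \<delta> / 2 ^ Suc k"
      using approx[of "\<delta> / 2 ^ Suc k" x] \<open>0 < \<delta>\<close> by auto
    have "z \<in> bounded_expansion (L * \<delta> / 2 ^ k)"
      using z(1) by (rule bounded_expansion_mono)
        (use mult_left_mono[OF conjunct1[OF x] \<open>0 \<le> L\<close>] in simp)
    then show "\<exists>x'. (norm x' \<le> \<delta> / 2 ^ Suc k \<and> (Suc k = 0 \<longrightarrow> x' = y)) \<and>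
        x - x' \<in> bounded_expansion (L * \<delta> / 2 ^ k)"
      using z(2) by (intro exI[of _ "x - z"]) simp
  qed
  then show ?thesis using that by blast
qed

lemma uniformly_bounded_expansion: "\<exists>L. \<forall>y. y \<in> bounded_expansion (L * norm y)"
proof -
  obtain L where "0 \<le> L"
    and approx: "\<And>y \<epsilon>. 0 < \<epsilon> \<Longrightarrow> \<exists>z\<in>bounded_expansion (L * norm y). norm (y - z) < \<epsilon>"
    using approximation_by_bounded_expansion by blast
  have "y \<in> bounded_expansion (2 * L * norm y)" for y
  proof (cases "y = 0")
    case True
    then show ?thesis using zero_in_bounded_expansion by simp
  next
    case False
    define \<delta> where "\<delta> = norm y"
    obtain r where "r 0 = y" and r_norm: "\<And>k. norm (r k) \<le> \<delta> / 2 ^ k"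
      and r_diff: "\<And>k. r k - r (Suc k) \<in> bounded_expansion (L * \<delta> / 2 ^ k)"
      using obtain_residuals[OF \<open>0 \<le> L\<close> approx, of \<delta> y] False by (auto simp: \<delta>_def)
    have "r \<longlonglongrightarrow> 0"
    proof (rule Lim_null_comparison)
      show "\<forall>\<^sub>F k in sequentially. norm (r k) \<le> \<delta> * (1 / 2) ^ k"
        using r_norm by (simp add: power_one_over field_simps)
      show "(\<lambda>k. \<delta> * (1 / 2) ^ k) \<longlonglongrightarrow> 0"
        by (intro tendsto_mult_right_zero LIMSEQ_power_zero) simp
    qed
    have telescope: "(\<lambda>k. r k - r (Suc k)) sums y"
      unfolding sums_def sum_lessThan_telescope' \<open>r 0 = y\<close>
      using tendsto_diff[OF tendsto_const[of y] \<open>r \<longlonglongrightarrow> 0\<close>] by simp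
    have geometric: "(\<lambda>k. L * \<delta> / 2 ^ k) sums (2 * L * \<delta>)"
      using sums_mult[OF geometric_sums[of "1 / 2 :: real"], of "L * \<delta>"]
      by (simp add: power_one_over field_simps)
    have "y \<in> bounded_expansion (\<Sum>k. L * \<delta> / 2 ^ k)"
      using telescope r_diff sums_summable[OF geometric] by (rule sums_in_bounded_expansion)
    then show ?thesis
      unfolding sums_unique[OF geometric, symmetric] by (simp add: \<delta>_def)
  qed
  then show ?thesis by blast
qed

lemma unconditional_basis_suppression_constant: "\<exists>L\<ge>1. suppression_constant e L"
proof -
  obtain L where L: "\<And>y. y \<in> bounded_expansion (L * norm y)"
    using uniformly_bounded_expansion by blast
  have "norm (\<Sum>j\<in>A. c j *\<^sub>R e j) \<le> max L 1 * norm (\<Sum>j\<in>B. c j *\<^sub>R e j)"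
    if "finite B" "A \<subseteq> B" for A B c
  proof -
    let ?y = "\<Sum>j\<in>B. c j *\<^sub>R e j"
    have "(\<Sum>j\<in>A. c j *\<^sub>R e j) = (\<Sum>j\<in>A. coeff ?y j *\<^sub>R e j)"
      using that by (intro sum.cong) (auto simp: coeff_sum)
    also have "norm \<dots> \<le> L * norm ?y"
      using bounded_expansionD[OF L] that finite_subset by blast
    also have "\<dots> \<le> max L 1 * norm ?y"
      by (intro mult_right_mono) auto
    finally show ?thesis .
  qed
  then show ?thesis
    unfolding suppression_constant_def by (intro exI[of _ "max L 1"]) auto
qed

end

section \<open>J-vectors\<close>

definition jvec :: "(nat \<Rightarrow> 'a::real_normed_vector) \<Rightarrow> (nat \<Rightarrow> real) \<Rightarrow> nat \<Rightarrow> (nat \<Rightarrow> nat) \<Rightarrow> 'a" where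
  "jvec e a k p = (\<Sum>i<k. (\<Sum>j\<in>{p i..<p (Suc i)}. a j) *\<^sub>R e (p i))"

lemma Jnorm_eq_SUP_jvec:
  "Jnorm e a = (SUP kp \<in> {(k, p). p 0 = 0 \<and> (\<forall>i<k. p i < p (Suc i))}. norm (jvec e a (fst kp) (snd kp)))"
  unfolding Jnorm_def jvec_def ..

lemma sum_consecutive_intervals:
  fixes p :: "nat \<Rightarrow> nat"
  assumes "\<And>i. i < k \<Longrightarrow> p i \<le> p (Suc i)"
  shows "(\<Sum>i<k. \<Sum>j\<in>{p i..<p (Suc i)}. f j) = (\<Sum>j\<in>{p 0..<p k}. f j)"
  using assms
proof (induction k)
  case (Suc k)
  have "p 0 \<le> p k"
    using Suc.prems by (rule lift_Suc_mono_le_ivl[of "{..<k}"]) auto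
  then show ?case
    using Suc sum.atLeastLessThan_concat[of "p 0" "p k" "p (Suc k)" f] by simp
qed simp

lemma norm_jvec_le:
  assumes "\<And>i. norm (e i) \<le> 1" and "\<And>i. i < k \<Longrightarrow> p i \<le> p (Suc i)"
  shows "norm (jvec e a k p) \<le> (\<Sum>j\<in>{p 0..<p k}. \<bar>a j\<bar>)"
proof -
  have "norm (jvec e a k p) \<le> (\<Sum>i<k. norm ((\<Sum>j\<in>{p i..<p (Suc i)}. a j) *\<^sub>R e (p i)))"
    unfolding jvec_def by (rule norm_sum)
  also have "\<dots> \<le> (\<Sum>i<k. \<Sum>j\<in>{p i..<p (Suc i)}. \<bar>a j\<bar>)"
    by (intro sum_mono) (simp add: order_trans[OF mult_left_le[OF assms(1) abs_ge_zero] sum_abs])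
  also have "\<dots> = (\<Sum>j\<in>{p 0..<p k}. \<bar>a j\<bar>)"
    using assms(2) by (rule sum_consecutive_intervals)
  finally show ?thesis .
qed

text \<open>Jnorm is a supremum in the conditionally complete lattice of reals, so it only behaves as one
  on bounded families; finite support provides the bound.\<close>

context
  fixes e :: "nat \<Rightarrow> 'a::real_normed_vector" and a :: "nat \<Rightarrow> real"
  assumes norm_e: "\<And>i. norm (e i) \<le> 1" and finite_support: "finite {j. a j \<noteq> 0}"
begin

lemma bdd_above_jvec:
  "bdd_above ((\<lambda>kp. norm (jvec e a (fst kp) (snd kp))) ` {(k, p). p 0 = 0 \<and> (\<forall>i<k. p i < p (Suc i))})"
proof (rule bdd_aboveI2, clarify)
  fix k :: nat and p :: "nat \<Rightarrow> nat"
  assume "\<forall>i<k. p i < p (Suc i)"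
  then have mono: "\<And>i. i < k \<Longrightarrow> p i \<le> p (Suc i)"
    by (simp add: le_less)
  let ?S = "{j. a j \<noteq> 0}"
  have "(\<Sum>j\<in>{p 0..<p k}. \<bar>a j\<bar>) = (\<Sum>j\<in>{p 0..<p k} \<inter> ?S. \<bar>a j\<bar>)"
    by (rule sum.mono_neutral_right) auto
  also have "\<dots> \<le> (\<Sum>j\<in>?S. \<bar>a j\<bar>)"
    using finite_support by (intro sum_mono2) auto
  finally show "norm (jvec e a (fst (k, p)) (snd (k, p))) \<le> (\<Sum>j\<in>?S. \<bar>a j\<bar>)"
    using norm_jvec_le[of e k p a, OF norm_e mono] by simp
qed

lemma norm_jvec_le_Jnorm:
  assumes "p 0 = 0" "\<And>i. i < k \<Longrightarrow> p i < p (Suc i)"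
  shows "norm (jvec e a k p) \<le> Jnorm e a"
  unfolding Jnorm_eq_SUP_jvec using assms
  by (intro cSUP_upper2[OF bdd_above_jvec, of "(k, p)"]) auto

lemma Jnorm_nonneg: "0 \<le> Jnorm e a"
  using norm_jvec_le_Jnorm[of "\<lambda>_. 0" 0] by (simp add: jvec_def)

lemma obtain_jvec_ge_half_Jnorm:
  obtains k p where "p 0 = 0" "\<forall>i<k. p i < p (Suc i)" "Jnorm e a \<le> 2 * norm (jvec e a k p)"
proof (cases "Jnorm e a = 0")
  case True
  then show ?thesis using that[of "\<lambda>_. 0" 0] by simp
next
  case False
  then have "Jnorm e a / 2 < (SUP kp \<in> {(k, p). p 0 = 0 \<and> (\<forall>i<k. p i < p (Suc i))}. norm (jvec e a (fst kp) (snd kp)))"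
    using Jnorm_nonneg by (simp flip: Jnorm_eq_SUP_jvec)
  then obtain k p where "p 0 = 0" "\<forall>i<k. p i < p (Suc i)" "Jnorm e a / 2 < norm (jvec e a k p)"
    by (subst (asm) less_cSUP_iff[OF _ bdd_above_jvec]) auto
  then show ?thesis using that[of p k] by simp
qed

end

section \<open>Interleaved positions and right dominance\<close>

definition interleaved :: "nat \<Rightarrow> (nat \<Rightarrow> nat) \<Rightarrow> (nat \<Rightarrow> nat) \<Rightarrow> bool" where
  "interleaved k m n \<longleftrightarrow> (\<forall>i<k. m i \<le> n i) \<and> (\<forall>i. Suc i < k \<longrightarrow> n i < m (Suc i))"

definition right_dominance_constant :: "(nat \<Rightarrow> 'a::real_normed_vector) \<Rightarrow> real \<Rightarrow> bool" where
  "right_dominance_constant e D \<longleftrightarrow> (\<forall>k m n b. interleaved k m n \<longrightarrow>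
     norm (\<Sum>i<k. b i *\<^sub>R e (m i)) \<le> D * norm (\<Sum>i<k. b i *\<^sub>R e (n i)))"

lemma right_dominant_imp_constant:
  assumes "right_dominant e"
  shows "\<exists>D\<ge>0. right_dominance_constant e D"
proof -
  obtain D where D: "\<And>k m n b. interleaved k m n \<Longrightarrow>
      norm (\<Sum>i<k. b i *\<^sub>R e (m i)) \<le> D * norm (\<Sum>i<k. b i *\<^sub>R e (n i))"
    using assms unfolding right_dominant_def interleaved_def by blast
  have "norm (\<Sum>i<k. b i *\<^sub>R e (m i)) \<le> max D 0 * norm (\<Sum>i<k. b i *\<^sub>R e (n i))"
    if "interleaved k m n" for k m n b
  proof -
    have "D * norm (\<Sum>i<k. b i *\<^sub>R e (n i)) \<le> max D 0 * norm (\<Sum>i<k. b i *\<^sub>R e (n i))"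
      by (rule mult_right_mono) simp_all
    with D[OF that] show ?thesis by (rule order_trans)
  qed
  then show ?thesis
    unfolding right_dominance_constant_def by (intro exI[of _ "max D 0"] conjI allI impI) simp_all
qed

lemma interleaved_less:
  assumes "interleaved k m n" "i < j" "j < k"
  shows "n i < m j"
  using assms(2,3)
proof (induction j)
  case (Suc j)
  have "n j < m (Suc j)"
    using assms(1) Suc.prems by (simp add: interleaved_def)
  moreover have "n i \<le> n j"
  proof (cases "i = j")
    case False
    then have "n i < m j" using Suc by simp
    also have "m j \<le> n j" using assms(1) Suc.prems by (simp add: interleaved_def)
    finally show ?thesis by simp
  qed simp
  ultimately show ?case by simp
qed simp

lemma interleaved_eq_imp_eq:
  assumes "interleaved k m n" "i < k" "j < k" "m i = n j"
  shows "i = j"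
proof (rule ccontr)
  assume "i \<noteq> j"
  then consider "i < j" | "j < i" by linarith
  then show False
  proof cases
    case 1
    have "m i \<le> n i" using assms(1,2) by (simp add: interleaved_def)
    also have "n i < m j" using interleaved_less[OF assms(1) 1 assms(3)] .
    also have "m j \<le> n j" using assms(1,3) by (simp add: interleaved_def)
    finally show False using assms(4) by simp
  next
    case 2
    then show False using interleaved_less[OF assms(1) 2 assms(2)] assms(4) by simp
  qed
qed

lemma interleaved_inj_on:
  assumes "interleaved k m n"
  shows "inj_on m {..<k}" "inj_on n {..<k}"
proof -
  have le: "m i \<le> n i" if "i < k" for i
    using assms that by (simp add: interleaved_def)
  have "m i < m j" "n i < n j" if "i < j" "j < k" for i j
    using interleaved_less[OF assms that] le[of i] le[of j] that by linarith+
  then show "inj_on m {..<k}" "inj_on n {..<k}"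
    by (metis inj_onI lessThan_iff linorder_neqE_nat less_irrefl)+
qed

lemma sum_positions_restrict:
  fixes e :: "nat \<Rightarrow> 'a::real_vector"
  assumes "finite I" "finite B"
  shows "(\<Sum>j\<in>B. (\<Sum>i\<in>I. if \<pi> i = j then c i else 0) *\<^sub>R e j)
       = (\<Sum>i\<in>I. if \<pi> i \<in> B then c i *\<^sub>R e (\<pi> i) else 0)"
proof -
  have "(\<Sum>j\<in>B. (\<Sum>i\<in>I. if \<pi> i = j then c i else 0) *\<^sub>R e j)
      = (\<Sum>i\<in>I. \<Sum>j\<in>B. if \<pi> i = j then c i *\<^sub>R e j else 0)"
    by (simp add: scaleR_sum_left if_distrib[of "\<lambda>t. t *\<^sub>R _"] cong: if_cong) (rule sum.swap)
  also have "\<dots> = (\<Sum>i\<in>I. if \<pi> i \<in> B then c i *\<^sub>R e (\<pi> i) else 0)"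
    using assms(2) by (simp add: sum.delta)
  finally show ?thesis .
qed

lemma norm_sum_positions_restrict_le:
  assumes "suppression_constant e L" "finite I"
  shows "norm (\<Sum>i\<in>I. if \<pi> i \<in> A then c i *\<^sub>R e (\<pi> i) else 0) \<le> L * norm (\<Sum>i\<in>I. c i *\<^sub>R e (\<pi> i))"
proof -
  define y where "y j = (\<Sum>i\<in>I. if \<pi> i = j then c i else 0)" for j
  have "(\<Sum>i\<in>I. if \<pi> i \<in> A then c i *\<^sub>R e (\<pi> i) else 0) = (\<Sum>j\<in>\<pi> ` I \<inter> A. y j *\<^sub>R e j)"
    unfolding y_def using assms(2) by (simp add: sum_positions_restrict)
  moreover have "(\<Sum>i\<in>I. c i *\<^sub>R e (\<pi> i)) = (\<Sum>j\<in>\<pi> ` I. y j *\<^sub>R e j)"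
    unfolding y_def using assms(2) by (simp add: sum_positions_restrict)
  ultimately show ?thesis
    using assms unfolding suppression_constant_def by auto
qed

lemma abs_coeff_le_suppression:
  fixes K :: nat
  assumes L: "suppression_constant e L" and norm_e: "\<And>j. norm (e j) = 1"
    and inj: "inj_on p {..<K}" and "k0 < K"
  shows "\<bar>c k0\<bar> \<le> L * norm (\<Sum>k<K. c k *\<^sub>R e (p k))"
proof -
  have "(\<Sum>k<K. if p k \<in> {p k0} then c k *\<^sub>R e (p k) else 0) = c k0 *\<^sub>R e (p k0)"
    using inj \<open>k0 < K\<close> by (simp add: inj_on_eq_iff cong: if_cong)
  then show ?thesis
    using norm_sum_positions_restrict_le[OF L, of "{..<K}" p "{p k0}" c] norm_e by simp
qed

lemma norm_sum_le_interleaved_split: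
  assumes L: "suppression_constant e L" and D: "right_dominance_constant e D" "0 \<le> D"
    and il: "interleaved K p z" and F: "\<And>k. k < K \<Longrightarrow> p k = z k \<Longrightarrow> F k = 0"
  shows "norm (\<Sum>k<K. (F k + G k) *\<^sub>R e (p k))
       \<le> (1 + D) * L * norm (\<Sum>k<K. F k *\<^sub>R e (p k) + G k *\<^sub>R e (z k))"
proof -
  let ?I = "{..<K} <+> {..<K}" and ?\<pi> = "case_sum p z" and ?c = "case_sum F G"
  let ?R = "\<Sum>k<K. F k *\<^sub>R e (p k) + G k *\<^sub>R e (z k)"
  have le: "p k \<le> z k" if "k < K" for k
    using il that by (simp add: interleaved_def)
  have R: "?R = (\<Sum>i\<in>?I. ?c i *\<^sub>R e (?\<pi> i))"
    by (simp add: sum.Plus sum.distrib)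
  have z_eq_p: "k' = k" if "k < K" "k' < K" "p k' = z k" for k k'
    using interleaved_eq_imp_eq[OF il that(2,1,3)] .
  define P where "P = p ` {k\<in>{..<K}. p k < z k}"
  have F_part: "(\<Sum>k<K. F k *\<^sub>R e (p k)) = (\<Sum>i\<in>?I. if ?\<pi> i \<in> P then ?c i *\<^sub>R e (?\<pi> i) else 0)"
  proof -
    have "p k \<in> P \<longleftrightarrow> p k < z k" if "k < K" for k
      using that inj_onD[OF interleaved_inj_on(1)[OF il]] by (auto simp: P_def)
    moreover have "z k \<notin> P" if "k < K" for k
      using that z_eq_p by (force simp: P_def)
    moreover have "F k = 0" if "k < K" "\<not> p k < z k" for k
      using F le that le_less by blast
    ultimately show ?thesis
      by (auto simp: sum.Plus intro!: sum.cong)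
  qed
  have G_part: "(\<Sum>k<K. G k *\<^sub>R e (z k)) = (\<Sum>i\<in>?I. if ?\<pi> i \<in> z ` {..<K} then ?c i *\<^sub>R e (?\<pi> i) else 0)"
  proof -
    have "F k = 0" if "k < K" "p k \<in> z ` {..<K}" for k
      using that F z_eq_p by blast
    then show ?thesis by (auto simp: sum.Plus intro!: sum.neutral)
  qed
  have "norm (\<Sum>k<K. F k *\<^sub>R e (p k)) \<le> L * norm ?R"
    unfolding F_part R by (rule norm_sum_positions_restrict_le[OF L]) simp
  moreover have "norm (\<Sum>k<K. G k *\<^sub>R e (z k)) \<le> L * norm ?R"
    unfolding G_part R by (rule norm_sum_positions_restrict_le[OF L]) simp
  moreover have "norm (\<Sum>k<K. G k *\<^sub>R e (p k)) \<le> D * norm (\<Sum>k<K. G k *\<^sub>R e (z k))"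
    using D(1) il unfolding right_dominance_constant_def by blast
  moreover have "(\<Sum>k<K. (F k + G k) *\<^sub>R e (p k)) = (\<Sum>k<K. F k *\<^sub>R e (p k)) + (\<Sum>k<K. G k *\<^sub>R e (p k))"
    by (simp add: scaleR_add_left sum.distrib)
  ultimately show ?thesis
    using norm_triangle_ineq[of "\<Sum>k<K. F k *\<^sub>R e (p k)" "\<Sum>k<K. G k *\<^sub>R e (p k)"]
      mult_left_mono[of "norm (\<Sum>k<K. G k *\<^sub>R e (z k))" "L * norm ?R" D] D(2)
    by (simp add: algebra_simps)
qed

section \<open>Blocks with vanishing sums\<close>

definition partial_sum :: "(nat \<Rightarrow> real) \<Rightarrow> nat \<Rightarrow> nat \<Rightarrow> nat \<Rightarrow> real" where
  "partial_sum a u v x = (\<Sum>j\<in>{u..<min v x}. a j)"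

lemma partial_sum_eq_0: "x \<le> u \<Longrightarrow> partial_sum a u v x = 0"
  by (simp add: partial_sum_def)

lemma partial_sum_above: "v \<le> x \<Longrightarrow> partial_sum a u v x = partial_sum a u v v"
  by (simp add: partial_sum_def)

lemma partial_sum_split:
  assumes "u \<le> w" "w \<le> x" "x \<le> v" "x \<le> v'"
  shows "partial_sum a u v x = partial_sum a u v w + partial_sum a w v' x"
  using assms sum.atLeastLessThan_concat[of u w x a] by (simp add: partial_sum_def min_absorb2)

lemma jvec_restrict_eq:
  assumes "\<And>k. k < K \<Longrightarrow> p k \<le> p (Suc k)"
  shows "jvec e (\<lambda>j. if j \<in> {u..<v} then a j else 0) K p
       = (\<Sum>k<K. (partial_sum a u v (p (Suc k)) - partial_sum a u v (p k)) *\<^sub>R e (p k))"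
proof -
  have initial: "(\<Sum>j<x. if j \<in> {u..<v} then a j else 0) = partial_sum a u v x" for x
  proof -
    have "(\<Sum>j<x. if j \<in> {u..<v} then a j else 0) = (\<Sum>j\<in>{..<x} \<inter> {u..<v}. a j)"
      by (rule sum.inter_restrict[symmetric]) simp
    also have "{..<x} \<inter> {u..<v} = {u..<min v x}" by auto
    finally show ?thesis unfolding partial_sum_def .
  qed
  have "(\<Sum>j\<in>{x..<y}. if j \<in> {u..<v} then a j else 0) = partial_sum a u v y - partial_sum a u v x"
    if "x \<le> y" for x y
  proof -
    let ?f = "\<lambda>j. if j \<in> {u..<v} then a j else 0"
    have "sum ?f {..<y} = sum ?f {..<x} + sum ?f {x..<y}"
      using sum.atLeastLessThan_concat[OF le0 that, of ?f] by (simp add: atLeast0LessThan)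
    then show ?thesis by (simp only: initial)
  qed
  then show ?thesis
    unfolding jvec_def using assms by (intro sum.cong) auto
qed

locale zero_sum_blocks =
  fixes n :: "nat \<Rightarrow> nat" and l :: nat and a :: "nat \<Rightarrow> real"
  assumes n_less: "\<And>i. i < l \<Longrightarrow> n i < n (Suc i)"
    and block_sum_zero: "\<And>i. i < l \<Longrightarrow> (\<Sum>j\<in>{n i..<n (Suc i)}. a j) = 0"
begin

abbreviation S :: "nat \<Rightarrow> real" where
  "S \<equiv> partial_sum a (n 0) (n l)"

abbreviation T :: "nat \<Rightarrow> nat \<Rightarrow> real" where
  "T i \<equiv> partial_sum a (n i) (n (Suc i))"

abbreviation block :: "nat \<Rightarrow> nat set" where
  "block i \<equiv> {n i..<n (Suc i)}"

lemma n_mono: "i \<le> j \<Longrightarrow> j \<le> l \<Longrightarrow> n i \<le> n j"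
  by (rule lift_Suc_mono_le_ivl[of "{..<l}"]) (auto simp: less_imp_le n_less)

lemma endpoint_not_inside_block:
  assumes "t \<le> l" "i < l" "n i < n t"
  shows "n (Suc i) \<le> n t"
  using assms n_mono[of t i] n_mono[of "Suc i" t] by (cases "t \<le> i") auto

lemma S_endpoint:
  assumes "t \<le> l"
  shows "S (n t) = 0"
proof -
  have "S (n t) = (\<Sum>j\<in>{n 0..<n t}. a j)"
    using n_mono[OF assms order_refl] by (simp add: partial_sum_def min_absorb2)
  also have "\<dots> = (\<Sum>i<t. \<Sum>j\<in>{n i..<n (Suc i)}. a j)"
    using assms n_less by (intro sum_consecutive_intervals[symmetric]) (simp add: less_imp_le)
  also have "\<dots> = 0"
    using assms block_sum_zero by simp
  finally show ?thesis .
qed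

lemma S_below: "x \<le> n 0 \<Longrightarrow> S x = 0"
  by (rule partial_sum_eq_0)

lemma S_above: "n l \<le> x \<Longrightarrow> S x = 0"
  using partial_sum_above[of "n l" x a "n 0"] S_endpoint[of l] by simp

lemma T_below: "x \<le> n i \<Longrightarrow> T i x = 0"
  by (rule partial_sum_eq_0)

lemma T_above: "i < l \<Longrightarrow> n (Suc i) \<le> x \<Longrightarrow> T i x = 0"
  using partial_sum_above[of "n (Suc i)" x a "n i"] block_sum_zero
  by (simp add: partial_sum_def)

lemma T_eq_S:
  assumes "i < l" "n i \<le> x" "x \<le> n (Suc i)"
  shows "T i x = S x"
proof -
  have "n 0 \<le> n i" "n (Suc i) \<le> n l"
    using n_mono assms(1) by auto
  then show ?thesis
    using partial_sum_split[of "n 0" "n i" x "n l" "n (Suc i)" a] S_endpoint[of i] assms by simp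
qed

end

text \<open>z k is the last block endpoint in \<open>[p k, p (k+1))\<close>, or p k if there is none. Cutting at z k
  has the same effect as inserting all block endpoints into p, because the coefficient sums between
  consecutive endpoints vanish.\<close>

locale refined_partition = zero_sum_blocks +
  fixes K :: nat and p z :: "nat \<Rightarrow> nat"
  assumes z_between: "\<And>k. k < K \<Longrightarrow> p k \<le> z k \<and> z k < p (Suc k)"
    and z_endpoint: "\<And>k. k < K \<Longrightarrow> p k < z k \<Longrightarrow> z k \<in> n ` {..l}"
    and z_last: "\<And>k t. k < K \<Longrightarrow> t \<le> l \<Longrightarrow> n t < p (Suc k) \<Longrightarrow> n t \<le> z k"
begin

definition F :: "nat \<Rightarrow> real" where
  "F k = S (z k) - S (p k)"

definition G :: "nat \<Rightarrow> real" where
  "G k = S (p (Suc k)) - S (z k)"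

definition block_coeff :: "nat \<Rightarrow> nat \<Rightarrow> real" where
  "block_coeff i k = T i (p (Suc k)) - T i (p k)"

definition refined_coeff :: "nat \<Rightarrow> real" where
  "refined_coeff j = (\<Sum>k<K. (if p k = j then F k else 0) + (if z k = j then G k else 0))"

lemma interleaved: "interleaved K p z"
  unfolding interleaved_def using z_between Suc_lessD by blast

lemma S_at_refinement_point: "k < K \<Longrightarrow> p k < z k \<Longrightarrow> S (z k) = 0"
  using z_endpoint S_endpoint by (metis atMost_iff imageE)

lemma F_support:
  assumes "k < K" "F k \<noteq> 0"
  shows "p k \<in> {n 0..<n l}"
proof -
  have "p k < z k"
    using assms z_between[of k] by (cases "p k = z k") (auto simp: F_def)
  then have "S (p k) \<noteq> 0"
    using assms S_at_refinement_point by (simp add: F_def)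
  then have "\<not> p k \<le> n 0" "\<not> n l \<le> p k"
    using S_below S_above by blast+
  then show ?thesis by simp
qed

lemma G_support:
  assumes "k < K" "G k \<noteq> 0"
  shows "z k \<in> {n 0..<n l}"
proof (rule ccontr)
  assume outside: "z k \<notin> {n 0..<n l}"
  have "S (z k) = 0 \<and> S (p (Suc k)) = 0"
  proof (cases "n l \<le> z k")
    case True
    then show ?thesis using S_above z_between[OF assms(1)] by simp
  next
    case False
    then have "z k < n 0" using outside by simp
    then have "p (Suc k) \<le> n 0"
      using z_last[OF assms(1), of 0] by fastforce
    then show ?thesis using S_below \<open>z k < n 0\<close> by simp
  qed
  then show False using assms(2) by (simp add: G_def)
qed

lemma sum_refined_coeff:
  fixes e :: "nat \<Rightarrow> 'a::real_vector"
  assumes "finite B"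
  shows "(\<Sum>j\<in>B. refined_coeff j *\<^sub>R e j)
       = (\<Sum>k<K. (if p k \<in> B then F k *\<^sub>R e (p k) else 0) + (if z k \<in> B then G k *\<^sub>R e (z k) else 0))"
  by (simp only: refined_coeff_def sum.distrib scaleR_add_left
      sum_positions_restrict[OF finite_lessThan assms])

context
  fixes i assumes i: "i < l"
begin

lemma block_coeffs:
  assumes k: "k < K"
  shows "p k \<in> block i \<Longrightarrow> z k \<in> block i \<Longrightarrow> z k = p k \<and> F k = 0 \<and> G k = block_coeff i k"
    and "p k \<in> block i \<Longrightarrow> z k \<notin> block i \<Longrightarrow> F k = block_coeff i k"
    and "p k \<notin> block i \<Longrightarrow> z k \<in> block i \<Longrightarrow> z k = n i \<and> G k = block_coeff i k"
proof -
  have pz: "p k \<le> z k" "z k < p (Suc k)"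
    using z_between[OF k] by auto
  have T_S: "T i x = S x" if "n i \<le> x" "x \<le> n (Suc i)" for x
    using T_eq_S[OF i that] .
  have z_ge: "n (Suc i) \<le> z k" if less: "p k < z k" and ge: "n i \<le> p k"
  proof -
    obtain t where "t \<le> l" "z k = n t" using z_endpoint[OF k less] by blast
    then show ?thesis
      using endpoint_not_inside_block[OF _ i] less ge by simp
  qed
  have p_le: "p (Suc k) \<le> n (Suc i)" if "z k < n (Suc i)"
    using z_last[OF k, of "Suc i"] i that by fastforce
  show "z k = p k \<and> F k = 0 \<and> G k = block_coeff i k" if "p k \<in> block i" "z k \<in> block i"
  proof -
    have "z k = p k" using z_ge that pz by force
    moreover have "p (Suc k) \<le> n (Suc i)" using p_le that by simp
    ultimately show ?thesis
      using that pz T_S by (simp add: block_coeff_def F_def G_def)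
  qed
  show "F k = block_coeff i k" if "p k \<in> block i" "z k \<notin> block i"
  proof -
    have "p k < z k" using that pz by (cases "p k = z k") auto
    then have "n (Suc i) \<le> z k" using z_ge that by simp
    then show ?thesis
      using that pz T_S T_above[OF i] S_at_refinement_point[OF k \<open>p k < z k\<close>] by (simp add: block_coeff_def F_def)
  qed
  show "z k = n i \<and> G k = block_coeff i k" if "p k \<notin> block i" "z k \<in> block i"
  proof -
    have "p k < z k" using that pz by (cases "p k = z k") auto
    then obtain t where "t \<le> l" "z k = n t" using z_endpoint[OF k] by blast
    then have "z k = n i"
      using that endpoint_not_inside_block[OF _ i, of t] n_mono[of t i] by force
    moreover have "p (Suc k) \<le> n (Suc i)" using p_le that by simp
    ultimately show ?thesis
      using that pz T_S T_below S_endpoint[of i] i by (simp add: block_coeff_def G_def)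
  qed
qed

lemma sum_refined_coeff_block:
  fixes e :: "nat \<Rightarrow> 'a::real_vector"
  shows "(\<Sum>j\<in>block i. refined_coeff j *\<^sub>R e j)
       = (\<Sum>k<K. if p k \<in> block i then block_coeff i k *\<^sub>R e (p k) else 0)
       + (\<Sum>k<K. if p k \<notin> block i \<and> z k \<in> block i then block_coeff i k *\<^sub>R e (z k) else 0)"
  unfolding sum_refined_coeff[OF finite_atLeastLessThan] sum.distrib[symmetric]
proof (intro sum.cong refl)
  fix k assume "k \<in> {..<K}"
  then show "(if p k \<in> block i then F k *\<^sub>R e (p k) else 0) + (if z k \<in> block i then G k *\<^sub>R e (z k) else 0)
      = (if p k \<in> block i then block_coeff i k *\<^sub>R e (p k) else 0)
      + (if p k \<notin> block i \<and> z k \<in> block i then block_coeff i k *\<^sub>R e (z k) else 0)"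
    using block_coeffs[of k] by (cases "p k \<in> block i"; cases "z k \<in> block i") auto
qed

lemma norm_moved_coeff_le:
  assumes L: "suppression_constant e L" "0 \<le> L" and norm_e: "\<And>j. norm (e j) = 1"
  shows "norm (\<Sum>k<K. if p k \<notin> block i \<and> z k \<in> block i then block_coeff i k *\<^sub>R e (z k) else 0)
       \<le> L * norm (\<Sum>k<K. block_coeff i k *\<^sub>R e (p k))"
proof (cases "\<exists>k0<K. p k0 \<notin> block i \<and> z k0 \<in> block i")
  case True
  then obtain k0 where k0: "k0 < K" "p k0 \<notin> block i" "z k0 \<in> block i" by blast
  have "{k \<in> {..<K}. p k \<notin> block i \<and> z k \<in> block i} = {k0}"
  proof (intro equalityI subsetI)
    fix k assume "k \<in> {k \<in> {..<K}. p k \<notin> block i \<and> z k \<in> block i}"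
    then have "k < K" "z k = z k0"
      using block_coeffs(3)[of k] block_coeffs(3)[OF k0] by auto
    then show "k \<in> {k0}"
      using inj_onD[OF interleaved_inj_on(2)[OF interleaved]] k0(1) by simp
  qed (use k0 in simp)
  then have "(\<Sum>k<K. if p k \<notin> block i \<and> z k \<in> block i then block_coeff i k *\<^sub>R e (z k) else 0)
      = block_coeff i k0 *\<^sub>R e (z k0)"
    by (simp flip: sum.inter_filter)
  then show ?thesis
    using abs_coeff_le_suppression[OF L(1) norm_e interleaved_inj_on(1)[OF interleaved] k0(1)] norm_e
    by simp
next
  case False
  then have "(\<Sum>k<K. if p k \<notin> block i \<and> z k \<in> block i then block_coeff i k *\<^sub>R e (z k) else 0) = 0"
    by (intro sum.neutral) auto
  then show ?thesis using L(2) by simp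
qed

lemma norm_refined_block_le:
  assumes L: "suppression_constant e L" "0 \<le> L" and norm_e: "\<And>j. norm (e j) = 1"
  shows "norm (\<Sum>j\<in>block i. refined_coeff j *\<^sub>R e j)
       \<le> 2 * L * norm (jvec e (\<lambda>j. if j \<in> block i then a j else 0) K p)"
proof -
  have "p k \<le> p (Suc k)" if "k < K" for k
    using z_between[OF that] by linarith
  then have jvec: "jvec e (\<lambda>j. if j \<in> block i then a j else 0) K p = (\<Sum>k<K. block_coeff i k *\<^sub>R e (p k))"
    unfolding block_coeff_def by (rule jvec_restrict_eq)
  have "norm (\<Sum>k<K. if p k \<in> block i then block_coeff i k *\<^sub>R e (p k) else 0)
      \<le> L * norm (\<Sum>k<K. block_coeff i k *\<^sub>R e (p k))"
    by (rule norm_sum_positions_restrict_le[OF L(1)]) simp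
  with norm_moved_coeff_le[OF L norm_e] show ?thesis
    unfolding sum_refined_coeff_block jvec by (intro norm_triangle_le) linarith
qed

end

lemma refined_vector_eq_sum_blocks:
  fixes e :: "nat \<Rightarrow> 'a::real_vector"
  shows "(\<Sum>k<K. F k *\<^sub>R e (p k) + G k *\<^sub>R e (z k))
       = (\<Sum>i<l. \<Sum>j\<in>block i. refined_coeff j *\<^sub>R e j)"
proof -
  have "(\<Sum>i<l. \<Sum>j\<in>block i. refined_coeff j *\<^sub>R e j) = (\<Sum>j\<in>{n 0..<n l}. refined_coeff j *\<^sub>R e j)"
    using n_less by (intro sum_consecutive_intervals) (simp add: less_imp_le)
  also have "\<dots> = (\<Sum>k<K. F k *\<^sub>R e (p k) + G k *\<^sub>R e (z k))"
    unfolding sum_refined_coeff[OF finite_atLeastLessThan]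
  proof (intro sum.cong refl)
    fix k assume "k \<in> {..<K}"
    then show "(if p k \<in> {n 0..<n l} then F k *\<^sub>R e (p k) else 0)
        + (if z k \<in> {n 0..<n l} then G k *\<^sub>R e (z k) else 0) = F k *\<^sub>R e (p k) + G k *\<^sub>R e (z k)"
      using F_support[of k] G_support[of k] by (cases "F k = 0"; cases "G k = 0") auto
  qed
  finally show ?thesis by simp
qed

lemma norm_jvec_le_refined_vector:
  assumes L: "suppression_constant e L" and D: "right_dominance_constant e D" "0 \<le> D"
  shows "norm (jvec e (\<lambda>j. if j \<in> {n 0..<n l} then a j else 0) K p)
       \<le> (1 + D) * L * norm (\<Sum>k<K. F k *\<^sub>R e (p k) + G k *\<^sub>R e (z k))"
proof -
  have "p k \<le> p (Suc k)" if "k < K" for k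
    using z_between[OF that] by linarith
  then have "jvec e (\<lambda>j. if j \<in> {n 0..<n l} then a j else 0) K p
      = (\<Sum>k<K. (S (p (Suc k)) - S (p k)) *\<^sub>R e (p k))"
    by (rule jvec_restrict_eq)
  also have "\<dots> = (\<Sum>k<K. (F k + G k) *\<^sub>R e (p k))"
    by (simp add: F_def G_def)
  finally have jvec: "jvec e (\<lambda>j. if j \<in> {n 0..<n l} then a j else 0) K p
      = (\<Sum>k<K. (F k + G k) *\<^sub>R e (p k))" .
  show ?thesis
    unfolding jvec by (rule norm_sum_le_interleaved_split[OF L D interleaved]) (simp add: F_def)
qed

end

lemma (in zero_sum_blocks) obtain_refined_partition:
  assumes "\<And>k. k < K \<Longrightarrow> p k < p (Suc k)"
  obtains z where "refined_partition n l a K p z"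
proof -
  define Z where "Z k = insert (p k) {t \<in> n ` {..l}. t < p (Suc k)}" for k
  have finite: "finite (Z k)" for k
    by (simp add: Z_def)
  have "refined_partition n l a K p (\<lambda>k. Max (Z k))"
  proof unfold_locales
    fix k assume "k < K"
    show "p k \<le> Max (Z k) \<and> Max (Z k) < p (Suc k)"
      using assms[OF \<open>k < K\<close>] finite by (auto simp: Z_def Max_less_iff)
    show "Max (Z k) \<in> n ` {..l}" if "p k < Max (Z k)"
      using Max_in[OF finite, of k] that by (auto simp: Z_def)
    show "n t \<le> Max (Z k)" if "t \<le> l" "n t < p (Suc k)" for t
      using that finite by (intro Max_ge) (auto simp: Z_def)
  qed
  then show ?thesis by (rule that)
qed

lemma (in zero_sum_blocks) ex_coefficients_dominating_Jnorm:
  assumes L: "suppression_constant e L" "1 \<le> L"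
    and D: "right_dominance_constant e D" "0 \<le> D"
    and norm_e: "\<And>j. norm (e j) = 1"
  shows "\<exists>c. (\<forall>i<l. norm (\<Sum>j\<in>block i. c j *\<^sub>R e j) \<le> Jnorm e (\<lambda>j. if j \<in> block i then a j else 0)) \<and>
             Jnorm e (\<lambda>j. if j \<in> {n 0..<n l} then a j else 0)
               \<le> 4 * (1 + D) * L\<^sup>2 * norm (\<Sum>i<l. \<Sum>j\<in>block i. c j *\<^sub>R e j)"
proof -
  have norm_le_1: "norm (e j) \<le> 1" for j using norm_e by simp
  have finite_support: "finite {j. (if j \<in> {u..<v} then a j else 0) \<noteq> 0}" for u v
    by (rule finite_subset[of _ "{u..<v}"]) auto
  obtain K p where p: "p 0 = 0" "\<forall>k<K. p k < p (Suc k)"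
    and near: "Jnorm e (\<lambda>j. if j \<in> {n 0..<n l} then a j else 0)
               \<le> 2 * norm (jvec e (\<lambda>j. if j \<in> {n 0..<n l} then a j else 0) K p)"
    by (rule obtain_jvec_ge_half_Jnorm[OF norm_le_1 finite_support])
  obtain z where "refined_partition n l a K p z"
    using obtain_refined_partition[of K p] p(2) by blast
  then interpret refined_partition n l a K p z .
  define c where "c j = refined_coeff j / (2 * L)" for j
  have blocks: "(\<Sum>j\<in>B. c j *\<^sub>R e j) = (1 / (2 * L)) *\<^sub>R (\<Sum>j\<in>B. refined_coeff j *\<^sub>R e j)" for B
    by (simp add: c_def scaleR_sum_right)
  have "norm (\<Sum>j\<in>block i. c j *\<^sub>R e j) \<le> Jnorm e (\<lambda>j. if j \<in> block i then a j else 0)"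
    if "i < l" for i
  proof -
    let ?b = "\<lambda>j. if j \<in> block i then a j else 0"
    have "norm (\<Sum>j\<in>block i. refined_coeff j *\<^sub>R e j) \<le> 2 * L * norm (jvec e ?b K p)"
      using L(2) by (intro norm_refined_block_le[OF that L(1) _ norm_e]) simp
    also have "\<dots> \<le> 2 * L * Jnorm e ?b"
      using norm_jvec_le_Jnorm[of e ?b p K, OF norm_le_1 finite_support p(1)] p(2) L(2)
      by (intro mult_left_mono) simp_all
    finally show ?thesis
      using L(2) by (simp add: blocks field_simps)
  qed
  moreover have "Jnorm e (\<lambda>j. if j \<in> {n 0..<n l} then a j else 0)
      \<le> 4 * (1 + D) * L\<^sup>2 * norm (\<Sum>i<l. \<Sum>j\<in>block i. c j *\<^sub>R e j)"
  proof -
    let ?R = "\<Sum>k<K. F k *\<^sub>R e (p k) + G k *\<^sub>R e (z k)"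
    have "(\<Sum>i<l. \<Sum>j\<in>block i. c j *\<^sub>R e j) = (1 / (2 * L)) *\<^sub>R ?R"
      by (simp add: blocks refined_vector_eq_sum_blocks scaleR_sum_right)
    then have "norm ?R = 2 * L * norm (\<Sum>i<l. \<Sum>j\<in>block i. c j *\<^sub>R e j)"
      using L(2) by simp
    moreover have "Jnorm e (\<lambda>j. if j \<in> {n 0..<n l} then a j else 0) \<le> 2 * ((1 + D) * L * norm ?R)"
      using near norm_jvec_le_refined_vector[OF L(1) D] by linarith
    ultimately show ?thesis
      by (simp add: power2_eq_square algebra_simps)
  qed
  ultimately show ?thesis by blast
qed

theorem lemma1:
  fixes e :: "nat \<Rightarrow> 'a::banach"
  assumes "right_dominant e" and "normalized e"
  shows "\<exists>C::real. \<forall>(l::nat) (n::nat \<Rightarrow> nat) (a::nat \<Rightarrow> real).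
    (\<forall>i<l. n i < n (Suc i)) \<and>
    (\<forall>i<l. (\<Sum>j\<in>{n i..<n (Suc i)}. a j) = 0) \<longrightarrow>
    (\<exists>(q::nat \<Rightarrow> nat) (c::nat \<Rightarrow> real).
       (\<forall>i<l. q i < q (Suc i)) \<and>
       (\<forall>i<l. norm (\<Sum>j\<in>{q i..<q (Suc i)}. c j *\<^sub>R e j)
               \<le> Jnorm e (\<lambda>j. if j \<in> {n i..<n (Suc i)} then a j else 0)) \<and>
       Jnorm e (\<lambda>j. if j \<in> {n 0..<n l} then a j else 0)
         \<le> C * norm (\<Sum>i<l. \<Sum>j\<in>{q i..<q (Suc i)}. c j *\<^sub>R e j))"
proof -
  have "unconditional_basis e"
    using assms(1) by (simp add: right_dominant_def)
  then obtain L where L: "suppression_constant e L" "1 \<le> L"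
    using unconditional_basis_suppression_constant by blast
  obtain D where D: "right_dominance_constant e D" "0 \<le> D"
    using right_dominant_imp_constant[OF assms(1)] by blast
  have norm_e: "norm (e j) = 1" for j
    using assms(2) by (simp add: normalized_def)
  show ?thesis
  proof (intro exI[of _ "4 * (1 + D) * L\<^sup>2"] allI impI)
    fix l :: nat and n :: "nat \<Rightarrow> nat" and a :: "nat \<Rightarrow> real"
    assume "(\<forall>i<l. n i < n (Suc i)) \<and> (\<forall>i<l. (\<Sum>j\<in>{n i..<n (Suc i)}. a j) = 0)"
    then interpret zero_sum_blocks n l a
      by unfold_locales auto
    show "\<exists>q c. (\<forall>i<l. q i < q (Suc i)) \<and>
       (\<forall>i<l. norm (\<Sum>j\<in>{q i..<q (Suc i)}. c j *\<^sub>R e j)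
               \<le> Jnorm e (\<lambda>j. if j \<in> {n i..<n (Suc i)} then a j else 0)) \<and>
       Jnorm e (\<lambda>j. if j \<in> {n 0..<n l} then a j else 0)
         \<le> 4 * (1 + D) * L\<^sup>2 * norm (\<Sum>i<l. \<Sum>j\<in>{q i..<q (Suc i)}. c j *\<^sub>R e j)"
      using ex_coefficients_dominating_Jnorm[OF L D norm_e] n_less by blast
  qed
qed

end
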